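(* Let $H,\mathsf H$ be semigroups, $\mathfrak h\colon H\to\mathsf H$ a homomorphism, $X$ an $H$-set, $S$ an order-complete ordered $\mathsf H$-set with completion $\overline S$, and $f\colon X\to\overline S$. Then the lower envelopes $\mathrm{lE}^f_{\mathcal H}$, $\mathrm{lE}^f_{\overline{\mathcal H}}$, $\mathrm{lE}^f_{\mathcal H_{\le}}$ all belong to $\mathcal H_{\le}$, and the upper envelopes $\mathrm{uE}_f^{\mathcal H}$, $\mathrm{uE}_f^{\overline{\mathcal H}}$, $\mathrm{uE}_f^{\mathcal H_{\ge}}$ all belong to $\mathcal H_{\ge}$. If moreover $\mathsf H$ is a group, then $\mathrm{lE}^f_{\mathcal H}$, $\mathrm{lE}^f_{\overline{\mathcal H}}$, $\mathrm{uE}_f^{\mathcal H}$, $\mathrm{uE}_f^{\overline{\mathcal H}}$ all belong to $\overline{\mathcal H}$.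
   Context: $X$ is an $H$-set: an action $(h,x)\mapsto hx$ with $h_1(h_2x)=(h_1h_2)x$ (and $1x=x$ if $H$ has identity $1$); similarly $S$ is an $\mathsf H$-set, with a partial order $\leqslant$ such that $s_1\leqslant s_2\Rightarrow\mathsf h s_1\leqslant\mathsf h s_2$. $S$ is order-complete: every nonempty subset bounded below (above) in $S$ has an infimum (supremum) in $S$. The completion $\overline S$ adjoins a new least element $\inf S$ if $S$ has none and a new greatest element $\sup S$ if $S$ has none; the action is extended by $\mathsf h\cdot\inf S=\inf S$, $\mathsf h\cdot\sup S=\sup S$ for the adjoined symbols; in $\overline S$, $\sup\varnothing$ is the least and $\inf\varnothing$ the greatest element. Functions $X\to\overline S$ are ordered pointwise; $S$-valued functions are regarded as $\overline S$-valued. Classes: $\mathcal H$ = functions $\varphi\colon X\to S$ with $\varphi(hx)=\mathfrak h(h)\varphi(x)$ for all $h\in H,x\in X$; $\overline{\mathcal H}$ = functions $\varphi\colon X\to\overline S$ with the same identity; $\mathcal H_{\le}$ = functions $\varphi\colon X\to\overline S$ with $\varphi(hx)\leqslant\mathfrak h(h)\varphi(x)$ for all $h,x$; $\mathcal H_{\ge}$ = functions $\varphi\colon X\to\overline S$ with $\mathfrak h(h)\varphi(x)\leqslant\varphi(hx)$ for all $h,x$. For a class $\Phi$ of functions $X\to\overline S$: the lower $\Phi$-envelope is $\mathrm{lE}^f_\Phi(x)=\sup\{\varphi(x):\varphi\in\Phi,\ \varphi\leqslant f\text{ on }X\}$, and the upper $\Phi$-envelope is $\mathrm{uE}_f^\Phi(x)=\inf\{\varphi(x):\varphi\in\Phi,\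 f\leqslant\varphi\text{ on }X\}$, with sup/inf taken in $\overline S$. *)

theory Defs
  imports Main
begin

definition is_action :: "('h::semigroup_mult \<Rightarrow> 'x \<Rightarrow> 'x) \<Rightarrow> bool" where
  "is_action act \<longleftrightarrow>
     (\<forall>h1 h2 x. act h1 (act h2 x) = act (h1 * h2) x) \<and>
     (\<forall>e. (\<forall>h. e * h = h \<and> h * e = h) \<longrightarrow> (\<forall>x. act e x = x))"

definition sg_hom :: "('h::semigroup_mult \<Rightarrow> 'k::semigroup_mult) \<Rightarrow> bool" where
  "sg_hom hh \<longleftrightarrow> (\<forall>a b. hh (a * b) = hh a * hh b)"

definition sg_is_group :: "'k::semigroup_mult itself \<Rightarrow> bool" where
  "sg_is_group _ \<longleftrightarrow> (\<exists>e::'k. (\<forall>k. e * k = k \<and> k * e = k) \<and>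
                                (\<forall>k. \<exists>k'. k' * k = e \<and> k * k' = e))"

definition is_inf_in :: "'a::order set \<Rightarrow> 'a set \<Rightarrow> 'a \<Rightarrow> bool" where
  "is_inf_in U A i \<longleftrightarrow> i \<in> U \<and> (\<forall>a\<in>A. i \<le> a) \<and> (\<forall>y\<in>U. (\<forall>a\<in>A. y \<le> a) \<longrightarrow> y \<le> i)"

definition is_sup_in :: "'a::order set \<Rightarrow> 'a set \<Rightarrow> 'a \<Rightarrow> bool" where
  "is_sup_in U A s \<longleftrightarrow> s \<in> U \<and> (\<forall>a\<in>A. a \<le> s) \<and> (\<forall>y\<in>U. (\<forall>a\<in>A. a \<le> y) \<longrightarrow> s \<le> y)"

text \<open>S is the whole type 's.\<close>
definition order_complete :: "'s::order itself \<Rightarrow> bool" where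
  "order_complete _ \<longleftrightarrow>
     (\<forall>A::'s set. A \<noteq> {} \<and> (\<exists>b. \<forall>a\<in>A. b \<le> a) \<longrightarrow> (\<exists>i. is_inf_in UNIV A i)) \<and>
     (\<forall>A::'s set. A \<noteq> {} \<and> (\<exists>b. \<forall>a\<in>A. a \<le> b) \<longrightarrow> (\<exists>s. is_sup_in UNIV A s))"

definition mono_action :: "('k \<Rightarrow> 's::order \<Rightarrow> 's) \<Rightarrow> bool" where
  "mono_action act \<longleftrightarrow> (\<forall>k s1 s2. s1 \<le> s2 \<longrightarrow> act k s1 \<le> act k s2)"

datatype 's cext = Bot | Val 's | Top

instantiation cext :: (order) order
begin

fun less_eq_cext :: "'a cext \<Rightarrow> 'a cext \<Rightarrow> bool" where
  "less_eq_cext Bot _ = True"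
| "less_eq_cext (Val a) (Val b) = (a \<le> b)"
| "less_eq_cext (Val a) Top = True"
| "less_eq_cext (Val a) Bot = False"
| "less_eq_cext Top Top = True"
| "less_eq_cext Top _ = False"

definition less_cext :: "'a cext \<Rightarrow> 'a cext \<Rightarrow> bool" where
  "less_cext a b \<longleftrightarrow> a \<le> b \<and> \<not> b \<le> a"

instance
proof
  fix x y z :: "'a cext"
  show "(x < y) = (x \<le> y \<and> \<not> y \<le> x)" by (simp add: less_cext_def)
  show "x \<le> x" by (cases x) auto
  show "x \<le> y \<Longrightarrow> y \<le> z \<Longrightarrow> x \<le> z"
    by (cases x; cases y; cases z) auto
  show "x \<le> y \<Longrightarrow> y \<le> x \<Longrightarrow> x = y"
    by (cases x; cases y) auto
qed
end

definition Sbar :: "'s::order cext set" where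
  "Sbar = range Val
      \<union> (if (\<exists>m::'s. \<forall>s. m \<le> s) then {} else {Bot})
      \<union> (if (\<exists>M::'s. \<forall>s. s \<le> M) then {} else {Top})"

definition sup_bar :: "'s::order cext set \<Rightarrow> 's cext" where
  "sup_bar A = (THE s. is_sup_in Sbar A s)"

definition inf_bar :: "'s::order cext set \<Rightarrow> 's cext" where
  "inf_bar A = (THE i. is_inf_in Sbar A i)"

fun ext_act :: "('k \<Rightarrow> 's \<Rightarrow> 's) \<Rightarrow> 'k \<Rightarrow> 's cext \<Rightarrow> 's cext" where
  "ext_act act k Bot = Bot"
| "ext_act act k (Val s) = Val (act k s)"
| "ext_act act k Top = Top"

definition Hcls :: "('h \<Rightarrow> 'x \<Rightarrow> 'x) \<Rightarrow> ('k \<Rightarrow> 's::order \<Rightarrow> 's) \<Rightarrow> ('h \<Rightarrow> 'k)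
                     \<Rightarrow> ('x \<Rightarrow> 's cext) set" where
  "Hcls actX actS hh = {\<phi>. (\<forall>x. \<phi> x \<in> range Val) \<and>
      (\<forall>h x. \<phi> (actX h x) = ext_act actS (hh h) (\<phi> x))}"

definition Hbar :: "('h \<Rightarrow> 'x \<Rightarrow> 'x) \<Rightarrow> ('k \<Rightarrow> 's::order \<Rightarrow> 's) \<Rightarrow> ('h \<Rightarrow> 'k)
                     \<Rightarrow> ('x \<Rightarrow> 's cext) set" where
  "Hbar actX actS hh = {\<phi>. (\<forall>x. \<phi> x \<in> Sbar) \<and>
      (\<forall>h x. \<phi> (actX h x) = ext_act actS (hh h) (\<phi> x))}"

definition Hle :: "('h \<Rightarrow> 'x \<Rightarrow> 'x) \<Rightarrow> ('k \<Rightarrow> 's::order \<Rightarrow> 's) \<Rightarrow> ('h \<Rightarrow> 'k)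
                     \<Rightarrow> ('x \<Rightarrow> 's cext) set" where
  "Hle actX actS hh = {\<phi>. (\<forall>x. \<phi> x \<in> Sbar) \<and>
      (\<forall>h x. \<phi> (actX h x) \<le> ext_act actS (hh h) (\<phi> x))}"

definition Hge :: "('h \<Rightarrow> 'x \<Rightarrow> 'x) \<Rightarrow> ('k \<Rightarrow> 's::order \<Rightarrow> 's) \<Rightarrow> ('h \<Rightarrow> 'k)
                     \<Rightarrow> ('x \<Rightarrow> 's cext) set" where
  "Hge actX actS hh = {\<phi>. (\<forall>x. \<phi> x \<in> Sbar) \<and>
      (\<forall>h x. ext_act actS (hh h) (\<phi> x) \<le> \<phi> (actX h x))}"

definition lE :: "('x \<Rightarrow> 's::order cext) set \<Rightarrow> ('x \<Rightarrow> 's cext) \<Rightarrow> 'x \<Rightarrow> 's cext" where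
  "lE \<Phi> f x = sup_bar {\<phi> x | \<phi>. \<phi> \<in> \<Phi> \<and> (\<forall>y. \<phi> y \<le> f y)}"

definition uE :: "('x \<Rightarrow> 's::order cext) set \<Rightarrow> ('x \<Rightarrow> 's cext) \<Rightarrow> 'x \<Rightarrow> 's cext" where
  "uE \<Phi> f x = inf_bar {\<phi> x | \<phi>. \<phi> \<in> \<Phi> \<and> (\<forall>y. f y \<le> \<phi> y)}"

end

theory Submission
  imports Defs
begin

text \<open>Both envelopes are pointwise suprema (infima) in the completion, which is a complete
  lattice. If every member of the class satisfies \<open>\<phi> (h x) \<le> h \<phi> (x)\<close>, then every
  candidate value at \<open>h x\<close> lies below \<open>h\<close> applied to the envelope at \<open>x\<close>, by monotonicity of
  the action; this gives membership in \<open>Hle\<close> (dually \<open>Hge\<close>). If the acting semigroup is a group, each \<open>h\<close> acts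
  on the completion as an order automorphism, which commutes with suprema and infima, and
  for an equivariant class it maps the candidate set at \<open>x\<close> onto the one at \<open>h x\<close>.\<close>

lemma Val_in_Sbar [simp]: "Val s \<in> Sbar"
  by (simp add: Sbar_def)

lemma cext_le_Top [simp]: "(a::'s::order cext) \<le> Top"
  by (cases a) auto

lemma cext_le_Bot_iff [simp]: "(a::'s::order cext) \<le> Bot \<longleftrightarrow> a = Bot"
  by (cases a) auto

lemma Bot_in_Sbar_iff: "(Bot::'s::order cext) \<in> Sbar \<longleftrightarrow> \<not> (\<exists>m::'s. \<forall>s. m \<le> s)"
  by (auto simp add: Sbar_def)

lemma Top_in_Sbar_iff: "(Top::'s::order cext) \<in> Sbar \<longleftrightarrow> \<not> (\<exists>M::'s. \<forall>s. s \<le> M)"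
  by (auto simp add: Sbar_def)

lemma Sbar_has_least:
  obtains l :: "'s::order cext" where "l \<in> Sbar" "\<And>y. y \<in> Sbar \<Longrightarrow> l \<le> y"
proof (cases "\<exists>m::'s. \<forall>s. m \<le> s")
  case True
  then obtain m :: 's where "\<forall>s. m \<le> s" by blast
  moreover have "y \<in> Sbar \<Longrightarrow> Val m \<le> y" for y
    using True by (cases y) (auto simp: Bot_in_Sbar_iff \<open>\<forall>s. m \<le> s\<close>)
  ultimately show ?thesis by (intro that[of "Val m"]) auto
next
  case False
  then show ?thesis by (intro that[of Bot]) (auto simp: Bot_in_Sbar_iff)
qed

lemma Sbar_has_greatest:
  obtains g :: "'s::order cext" where "g \<in> Sbar" "\<And>y. y \<in> Sbar \<Longrightarrow> y \<le> g"
proof (cases "\<exists>M::'s. \<forall>s. s \<le> M")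
  case True
  then obtain M :: 's where "\<forall>s. s \<le> M" by blast
  moreover have "y \<in> Sbar \<Longrightarrow> y \<le> Val M" for y
    using True by (cases y) (auto simp: Top_in_Sbar_iff \<open>\<forall>s. s \<le> M\<close>)
  ultimately show ?thesis by (intro that[of "Val M"]) auto
next
  case False
  then show ?thesis by (intro that[of Top]) (auto simp: Top_in_Sbar_iff)
qed

lemma Val_upper_bound_iff:
  "Top \<notin> A \<Longrightarrow> (\<forall>a\<in>A. a \<le> Val z) \<longleftrightarrow> (\<forall>v. Val v \<in> A \<longrightarrow> v \<le> z)"
  by (metis cext.exhaust less_eq_cext.simps(1,2))

lemma Val_lower_bound_iff:
  "Bot \<notin> A \<Longrightarrow> (\<forall>a\<in>A. Val z \<le> a) \<longleftrightarrow> (\<forall>v. Val v \<in> A \<longrightarrow> z \<le> v)"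
  by (metis cext.exhaust cext_le_Top less_eq_cext.simps(2) cext_le_Bot_iff)

lemma is_sup_in_unique: "is_sup_in U A s \<Longrightarrow> is_sup_in U A t \<Longrightarrow> s = (t::'a::order)"
  unfolding is_sup_in_def by (meson order_antisym)

lemma is_inf_in_unique: "is_inf_in U A s \<Longrightarrow> is_inf_in U A t \<Longrightarrow> s = (t::'a::order)"
  unfolding is_inf_in_def by (meson order_antisym)

lemma Sbar_sup_exists:
  assumes oc: "order_complete TYPE('s::order)" and A: "A \<subseteq> (Sbar::'s cext set)"
  shows "\<exists>s. is_sup_in Sbar A s"
proof -
  define V where "V = {v. Val v \<in> A}"
  consider "Top \<in> A" | "Top \<notin> A" "V = {}" | "Top \<notin> A" "V \<noteq> {}" by blast
  then show ?thesis
  proof cases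
    case 1
    with A show ?thesis by (auto simp: is_sup_in_def)
  next
    case 2
    then have "A \<subseteq> {Bot}" by (auto simp: V_def) (metis cext.exhaust)
    moreover obtain l :: "'s cext" where "l \<in> Sbar" "\<And>y. y \<in> Sbar \<Longrightarrow> l \<le> y"
      by (meson Sbar_has_least)
    ultimately have "is_sup_in Sbar A l" by (auto simp: is_sup_in_def)
    then show ?thesis ..
  next
    case 3
    then obtain v where "Val v \<in> A" by (auto simp: V_def)
    then have no_Bot: "\<not> (\<forall>a\<in>A. a \<le> Bot)" by force
    show ?thesis
    proof (cases "\<exists>b. \<forall>v\<in>V. v \<le> b")
      case True
      with 3 oc obtain t where t: "is_sup_in UNIV V t" unfolding order_complete_def by blast
      have "Val t \<le> y" if "\<forall>a\<in>A. a \<le> y" for y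
        using that t no_Bot Val_upper_bound_iff[OF \<open>Top \<notin> A\<close>]
        by (cases y) (auto simp: is_sup_in_def V_def)
      then have "is_sup_in Sbar A (Val t)"
        using t Val_upper_bound_iff[OF \<open>Top \<notin> A\<close>] by (auto simp: is_sup_in_def V_def)
      then show ?thesis ..
    next
      case False
      then have "(Top::'s cext) \<in> Sbar" by (auto simp: Top_in_Sbar_iff V_def)
      moreover have "\<forall>a\<in>A. a \<le> y \<Longrightarrow> y = Top" for y
        using False no_Bot Val_upper_bound_iff[OF \<open>Top \<notin> A\<close>]
        by (cases y) (auto simp: V_def)
      ultimately have "is_sup_in Sbar A Top" by (auto simp: is_sup_in_def)
      then show ?thesis ..
    qed
  qed
qed

lemma Sbar_inf_exists:
  assumes oc: "order_complete TYPE('s::order)" and A: "A \<subseteq> (Sbar::'s cext set)"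
  shows "\<exists>i. is_inf_in Sbar A i"
proof -
  define V where "V = {v. Val v \<in> A}"
  consider "Bot \<in> A" | "Bot \<notin> A" "V = {}" | "Bot \<notin> A" "V \<noteq> {}" by blast
  then show ?thesis
  proof cases
    case 1
    with A show ?thesis by (auto simp: is_inf_in_def)
  next
    case 2
    then have "A \<subseteq> {Top}" by (auto simp: V_def) (metis cext.exhaust)
    moreover obtain g :: "'s cext" where "g \<in> Sbar" "\<And>y. y \<in> Sbar \<Longrightarrow> y \<le> g"
      by (meson Sbar_has_greatest)
    ultimately have "is_inf_in Sbar A g" by (auto simp: is_inf_in_def)
    then show ?thesis ..
  next
    case 3
    then obtain v where "Val v \<in> A" by (auto simp: V_def)
    then have no_Top: "\<not> (\<forall>a\<in>A. Top \<le> a)" by force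
    show ?thesis
    proof (cases "\<exists>b. \<forall>v\<in>V. b \<le> v")
      case True
      with 3 oc obtain t where t: "is_inf_in UNIV V t" unfolding order_complete_def by blast
      have "y \<le> Val t" if "\<forall>a\<in>A. y \<le> a" for y
        using that t no_Top Val_lower_bound_iff[OF \<open>Bot \<notin> A\<close>]
        by (cases y) (auto simp: is_inf_in_def V_def)
      then have "is_inf_in Sbar A (Val t)"
        using t Val_lower_bound_iff[OF \<open>Bot \<notin> A\<close>] by (auto simp: is_inf_in_def V_def)
      then show ?thesis ..
    next
      case False
      then have "(Bot::'s cext) \<in> Sbar" by (auto simp: Bot_in_Sbar_iff V_def)
      moreover have "\<forall>a\<in>A. y \<le> a \<Longrightarrow> y = Bot" for y
        using False no_Top Val_lower_bound_iff[OF \<open>Bot \<notin> A\<close>]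
        by (cases y) (auto simp: V_def)
      ultimately have "is_inf_in Sbar A Bot" by (auto simp: is_inf_in_def)
      then show ?thesis ..
    qed
  qed
qed

lemma is_sup_in_sup_bar:
  assumes "order_complete TYPE('s::order)" "A \<subseteq> (Sbar::'s cext set)"
  shows "is_sup_in Sbar A (sup_bar A)"
  unfolding sup_bar_def using Sbar_sup_exists[OF assms] is_sup_in_unique by (metis theI)

lemma is_inf_in_inf_bar:
  assumes "order_complete TYPE('s::order)" "A \<subseteq> (Sbar::'s cext set)"
  shows "is_inf_in Sbar A (inf_bar A)"
  unfolding inf_bar_def using Sbar_inf_exists[OF assms] is_inf_in_unique by (metis theI)

lemma is_sup_in_lE:
  assumes "order_complete TYPE('s::order)" "\<forall>\<phi>\<in>\<Phi>. \<forall>x. \<phi> x \<in> (Sbar::'s cext set)"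
  shows "is_sup_in Sbar {\<phi> x | \<phi>. \<phi> \<in> \<Phi> \<and> (\<forall>y. \<phi> y \<le> f y)} (lE \<Phi> f x)"
  unfolding lE_def using assms by (intro is_sup_in_sup_bar) auto

lemma is_inf_in_uE:
  assumes "order_complete TYPE('s::order)" "\<forall>\<phi>\<in>\<Phi>. \<forall>x. \<phi> x \<in> (Sbar::'s cext set)"
  shows "is_inf_in Sbar {\<phi> x | \<phi>. \<phi> \<in> \<Phi> \<and> (\<forall>y. f y \<le> \<phi> y)} (uE \<Phi> f x)"
  unfolding uE_def using assms by (intro is_inf_in_inf_bar) auto

lemma mono_ext_act:
  assumes "mono_action (actS :: 'k \<Rightarrow> 's::order \<Rightarrow> 's)"
  shows "mono (ext_act actS k)"
proof (rule monoI)
  fix a b :: "'s cext"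
  assume "a \<le> b"
  with assms show "ext_act actS k a \<le> ext_act actS k b"
    by (cases a; cases b) (auto simp: mono_action_def)
qed

lemma ext_act_image_Sbar: "ext_act actS k ` Sbar \<subseteq> Sbar"
proof -
  have "a \<in> Sbar \<Longrightarrow> ext_act actS k a \<in> Sbar" for a by (cases a) auto
  then show ?thesis by blast
qed

lemma Hcls_subset_Hbar: "Hcls actX actS hh \<subseteq> Hbar actX actS hh"
  unfolding Hcls_def Hbar_def by (auto simp: image_iff) (metis Val_in_Sbar)

lemma Hbar_subset_Hle: "Hbar actX actS hh \<subseteq> Hle actX actS hh"
  by (auto simp: Hbar_def Hle_def)

lemma Hbar_subset_Hge: "Hbar actX actS hh \<subseteq> Hge actX actS hh"
  by (auto simp: Hbar_def Hge_def)

lemma lE_in_Hle: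
  assumes oc: "order_complete TYPE('s::order)" and mono: "mono_action actS"
    and \<Phi>: "\<Phi> \<subseteq> Hle actX (actS :: 'k \<Rightarrow> 's \<Rightarrow> 's) hh"
  shows "lE \<Phi> f \<in> Hle actX actS hh"
proof -
  have sup: "is_sup_in Sbar {\<phi> x | \<phi>. \<phi> \<in> \<Phi> \<and> (\<forall>y. \<phi> y \<le> f y)} (lE \<Phi> f x)" for x
    using \<Phi> by (intro is_sup_in_lE[OF oc]) (auto simp: Hle_def)
  have "lE \<Phi> f (actX h x) \<le> ext_act actS (hh h) (lE \<Phi> f x)" for h x
  proof -
    have "\<phi> (actX h x) \<le> ext_act actS (hh h) (lE \<Phi> f x)"
      if "\<phi> \<in> \<Phi>" "\<forall>y. \<phi> y \<le> f y" for \<phi>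
    proof -
      have "\<phi> x \<le> lE \<Phi> f x" using sup[of x] that by (auto simp: is_sup_in_def)
      then have "ext_act actS (hh h) (\<phi> x) \<le> ext_act actS (hh h) (lE \<Phi> f x)"
        by (rule monoD[OF mono_ext_act[OF mono]])
      moreover have "\<phi> (actX h x) \<le> ext_act actS (hh h) (\<phi> x)"
        using \<Phi> \<open>\<phi> \<in> \<Phi>\<close> by (auto simp: Hle_def)
      ultimately show ?thesis by (rule order_trans[rotated])
    qed
    moreover have "ext_act actS (hh h) (lE \<Phi> f x) \<in> Sbar"
      using sup[of x] by (auto simp: is_sup_in_def intro: ext_act_image_Sbar[THEN subsetD])
    ultimately show ?thesis using sup[of "actX h x"] by (auto simp: is_sup_in_def)
  qed
  then show ?thesis using sup by (auto simp: Hle_def is_sup_in_def)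
qed

lemma uE_in_Hge:
  assumes oc: "order_complete TYPE('s::order)" and mono: "mono_action actS"
    and \<Phi>: "\<Phi> \<subseteq> Hge actX (actS :: 'k \<Rightarrow> 's \<Rightarrow> 's) hh"
  shows "uE \<Phi> f \<in> Hge actX actS hh"
proof -
  have inf: "is_inf_in Sbar {\<phi> x | \<phi>. \<phi> \<in> \<Phi> \<and> (\<forall>y. f y \<le> \<phi> y)} (uE \<Phi> f x)" for x
    using \<Phi> by (intro is_inf_in_uE[OF oc]) (auto simp: Hge_def)
  have "ext_act actS (hh h) (uE \<Phi> f x) \<le> uE \<Phi> f (actX h x)" for h x
  proof -
    have "ext_act actS (hh h) (uE \<Phi> f x) \<le> \<phi> (actX h x)"
      if "\<phi> \<in> \<Phi>" "\<forall>y. f y \<le> \<phi> y" for \<phi>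
    proof -
      have "uE \<Phi> f x \<le> \<phi> x" using inf[of x] that by (auto simp: is_inf_in_def)
      then have "ext_act actS (hh h) (uE \<Phi> f x) \<le> ext_act actS (hh h) (\<phi> x)"
        by (rule monoD[OF mono_ext_act[OF mono]])
      moreover have "ext_act actS (hh h) (\<phi> x) \<le> \<phi> (actX h x)"
        using \<Phi> \<open>\<phi> \<in> \<Phi>\<close> by (auto simp: Hge_def)
      ultimately show ?thesis by (rule order_trans)
    qed
    moreover have "ext_act actS (hh h) (uE \<Phi> f x) \<in> Sbar"
      using inf[of x] by (auto simp: is_inf_in_def intro: ext_act_image_Sbar[THEN subsetD])
    ultimately show ?thesis using inf[of "actX h x"] by (auto simp: is_inf_in_def)
  qed
  then show ?thesis using inf by (auto simp: Hge_def is_inf_in_def)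
qed

lemma ext_act_invertible:
  assumes group: "sg_is_group TYPE('k::semigroup_mult)" and act: "is_action (actS :: 'k \<Rightarrow> 's \<Rightarrow> 's)"
  obtains k' where "\<And>a. ext_act actS k' (ext_act actS k a) = a"
    and "\<And>a. ext_act actS k (ext_act actS k' a) = a"
proof -
  obtain e :: 'k where e: "\<forall>k. e * k = k \<and> k * e = k"
    and inverse: "\<forall>k. \<exists>k'. k' * k = e \<and> k * k' = e"
    using group unfolding sg_is_group_def by blast
  obtain k' where k': "k' * k = e" "k * k' = e" using inverse by blast
  have unit: "actS e s = s" for s using act e unfolding is_action_def by blast
  have compose: "actS a (actS b s) = actS (a * b) s" for a b s
    using act unfolding is_action_def by blast
  show ?thesis
  proof (rule that)
    show "ext_act actS k' (ext_act actS k a) = a" for a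
      by (cases a) (simp_all add: compose k' unit)
    show "ext_act actS k (ext_act actS k' a) = a" for a
      by (cases a) (simp_all add: compose k' unit)
  qed
qed

lemma is_sup_in_image_automorphism:
  assumes inverse: "\<And>a. g' (g a) = a" "\<And>a. g (g' a) = a"
    and mono: "mono g" "mono g'" and closed: "g ` U \<subseteq> U" "g' ` U \<subseteq> U"
    and sup: "is_sup_in U A (s::'a::order)"
  shows "is_sup_in U (g ` A) (g s)"
  unfolding is_sup_in_def
proof (intro conjI ballI impI)
  show "g s \<in> U" using sup closed by (auto simp: is_sup_in_def)
  show "b \<le> g s" if "b \<in> g ` A" for b
    using that sup mono by (auto simp: is_sup_in_def monoD)
  show "g s \<le> y" if "y \<in> U" "\<forall>b\<in>g ` A. b \<le> y" for y
  proof -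
    have "\<forall>a\<in>A. a \<le> g' y" using that mono inverse by (metis image_eqI monoD)
    then have "s \<le> g' y" using sup closed that by (auto simp: is_sup_in_def)
    then show ?thesis using mono inverse by (metis monoD)
  qed
qed

lemma is_inf_in_image_automorphism:
  assumes inverse: "\<And>a. g' (g a) = a" "\<And>a. g (g' a) = a"
    and mono: "mono g" "mono g'" and closed: "g ` U \<subseteq> U" "g' ` U \<subseteq> U"
    and inf: "is_inf_in U A (i::'a::order)"
  shows "is_inf_in U (g ` A) (g i)"
  unfolding is_inf_in_def
proof (intro conjI ballI impI)
  show "g i \<in> U" using inf closed by (auto simp: is_inf_in_def)
  show "g i \<le> b" if "b \<in> g ` A" for b
    using that inf mono by (auto simp: is_inf_in_def monoD)
  show "y \<le> g i" if "y \<in> U" "\<forall>b\<in>g ` A. y \<le> b" for y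
  proof -
    have "\<forall>a\<in>A. g' y \<le> a" using that mono inverse by (metis image_eqI monoD)
    then have "g' y \<le> i" using inf closed that by (auto simp: is_inf_in_def)
    then show ?thesis using mono inverse by (metis monoD)
  qed
qed

lemma Hbar_candidates_image:
  assumes "\<Phi> \<subseteq> Hbar actX actS hh"
  shows "{\<phi> (actX h x) | \<phi>. \<phi> \<in> \<Phi> \<and> P \<phi>} = ext_act actS (hh h) ` {\<phi> x | \<phi>. \<phi> \<in> \<Phi> \<and> P \<phi>}"
proof -
  have "\<phi> (actX h x) = ext_act actS (hh h) (\<phi> x)" if "\<phi> \<in> \<Phi>" for \<phi>
    using assms that by (auto simp: Hbar_def)
  then have "{\<phi> (actX h x) | \<phi>. \<phi> \<in> \<Phi> \<and> P \<phi>} = {ext_act actS (hh h) (\<phi> x) | \<phi>. \<phi> \<in> \<Phi> \<and> P \<phi>}"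
    by (metis (no_types, lifting))
  then show ?thesis by blast
qed

lemma lE_uE_in_Hbar:
  assumes oc: "order_complete TYPE('s::order)" and mono: "mono_action actS"
    and group: "sg_is_group TYPE('k::semigroup_mult)" and act: "is_action (actS :: 'k \<Rightarrow> 's \<Rightarrow> 's)"
    and \<Phi>: "\<Phi> \<subseteq> Hbar actX actS hh"
  shows "lE \<Phi> f \<in> Hbar actX actS hh \<and> uE \<Phi> f \<in> Hbar actX actS hh"
proof -
  have Sbar_valued: "\<forall>\<phi>\<in>\<Phi>. \<forall>x. \<phi> x \<in> Sbar" using \<Phi> by (auto simp: Hbar_def)
  note sup = is_sup_in_lE[OF oc Sbar_valued] and inf = is_inf_in_uE[OF oc Sbar_valued]
  have "lE \<Phi> f (actX h x) = ext_act actS (hh h) (lE \<Phi> f x) \<and>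
        uE \<Phi> f (actX h x) = ext_act actS (hh h) (uE \<Phi> f x)" for h x
  proof -
    obtain k' where k': "\<And>a. ext_act actS k' (ext_act actS (hh h) a) = a"
        "\<And>a. ext_act actS (hh h) (ext_act actS k' a) = a"
      using ext_act_invertible[OF group act] by blast
    note automorphism = k' mono_ext_act[OF mono] mono_ext_act[OF mono]
      ext_act_image_Sbar ext_act_image_Sbar
    have "is_sup_in Sbar {\<phi> (actX h x) | \<phi>. \<phi> \<in> \<Phi> \<and> (\<forall>y. \<phi> y \<le> f y)}
        (ext_act actS (hh h) (lE \<Phi> f x))"
      unfolding Hbar_candidates_image[OF \<Phi>] by (rule is_sup_in_image_automorphism[OF automorphism sup])
    moreover have "is_inf_in Sbar {\<phi> (actX h x) | \<phi>. \<phi> \<in> \<Phi> \<and> (\<forall>y. f y \<le> \<phi> y)}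
        (ext_act actS (hh h) (uE \<Phi> f x))"
      unfolding Hbar_candidates_image[OF \<Phi>] by (rule is_inf_in_image_automorphism[OF automorphism inf])
    ultimately show ?thesis using is_sup_in_unique[OF sup] is_inf_in_unique[OF inf] by simp
  qed
  then show ?thesis using sup inf by (auto simp: Hbar_def is_sup_in_def is_inf_in_def)
qed

theorem corollary1:
  fixes actX :: "'h::semigroup_mult \<Rightarrow> 'x \<Rightarrow> 'x"
    and actS :: "'k::semigroup_mult \<Rightarrow> 's::order \<Rightarrow> 's"
    and hh :: "'h \<Rightarrow> 'k"
    and f :: "'x \<Rightarrow> 's cext"
  assumes "sg_hom hh"
    and "is_action actX"
    and "is_action actS"
    and "mono_action actS"
    and "order_complete TYPE('s)"
    and "\<forall>x. f x \<in> Sbar"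
  shows "lE (Hcls actX actS hh) f \<in> Hle actX actS hh
       \<and> lE (Hbar actX actS hh) f \<in> Hle actX actS hh
       \<and> lE (Hle actX actS hh) f \<in> Hle actX actS hh
       \<and> uE (Hcls actX actS hh) f \<in> Hge actX actS hh
       \<and> uE (Hbar actX actS hh) f \<in> Hge actX actS hh
       \<and> uE (Hge actX actS hh) f \<in> Hge actX actS hh
       \<and> (sg_is_group TYPE('k) \<longrightarrow>
            lE (Hcls actX actS hh) f \<in> Hbar actX actS hh
          \<and> lE (Hbar actX actS hh) f \<in> Hbar actX actS hh
          \<and> uE (Hcls actX actS hh) f \<in> Hbar actX actS hh
          \<and> uE (Hbar actX actS hh) f \<in> Hbar actX actS hh)"
proof -
  have Hcls_Hbar: "Hcls actX actS hh \<subseteq> Hbar actX actS hh" by (rule Hcls_subset_Hbar)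
  have Hbar_Hle: "Hbar actX actS hh \<subseteq> Hle actX actS hh" by (rule Hbar_subset_Hle)
  have Hbar_Hge: "Hbar actX actS hh \<subseteq> Hge actX actS hh" by (rule Hbar_subset_Hge)
  note lE_Hle = lE_in_Hle[OF assms(5,4)] and uE_Hge = uE_in_Hge[OF assms(5,4)]
  note Hbar = lE_uE_in_Hbar[OF assms(5,4) _ assms(3)]
  show ?thesis
  proof (intro conjI impI)
    show "lE (Hcls actX actS hh) f \<in> Hle actX actS hh"
      using Hcls_Hbar Hbar_Hle by (intro lE_Hle) (rule order_trans)
    show "lE (Hbar actX actS hh) f \<in> Hle actX actS hh" by (rule lE_Hle[OF Hbar_Hle])
    show "lE (Hle actX actS hh) f \<in> Hle actX actS hh" by (rule lE_Hle[OF order_refl])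
    show "uE (Hcls actX actS hh) f \<in> Hge actX actS hh"
      using Hcls_Hbar Hbar_Hge by (intro uE_Hge) (rule order_trans)
    show "uE (Hbar actX actS hh) f \<in> Hge actX actS hh" by (rule uE_Hge[OF Hbar_Hge])
    show "uE (Hge actX actS hh) f \<in> Hge actX actS hh" by (rule uE_Hge[OF order_refl])
  qed (use Hbar[OF _ Hcls_Hbar] Hbar[OF _ order_refl] in blast)+
qed

end
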